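(* Let $(X,d)$ and $(\Lambda,\rho)$ be compact metric spaces, let $\omega:\Lambda\times X\to X$ be continuous, and fix a Borel probability measure $p$ on $\Lambda$. Let $$S=\{\sigma\in\Omega:\lim_{n\to\infty}\operatorname{Diam}(\omega_{\sigma_1}\circ\cdots\circ\omega_{\sigma_n}(X))=0\},$$ $$F=\Big\{\sigma\in\Omega:\lim_{n\to\infty}\frac1n\sum_{i=1}^n\operatorname{Diam}(\omega_{\sigma_i}\circ\cdots\circ\omega_{\sigma_1}(X))=0\Big\}.$$ Then $\mathbb{P}(F)=1$ if and only if $\mathbb{P}(S)=1$.
   Context: $\omega_\lambda(x)=\omega(\lambda,x)$. $\Omega=\Lambda^{\mathbb{N}}$ with the product topology and $\mathbb{P}=p^{\mathbb{N}}$ the product measure. $\operatorname{Diam}(A)=\sup\{d(x,y):x,y\in A\}$. *)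

theory Defs
  imports "HOL-Probability.Probability"
begin

text \<open>Forward composition: fwd_comp w s n = w (s 0) o w (s 1) o ... o w (s (n-1))
  (the paper's omega_{sigma_1} o ... o omega_{sigma_n}, with 0-based indices).\<close>
fun fwd_comp :: "('l \<Rightarrow> 'a \<Rightarrow> 'a) \<Rightarrow> (nat \<Rightarrow> 'l) \<Rightarrow> nat \<Rightarrow> 'a \<Rightarrow> 'a" where
  "fwd_comp w s 0 = id"
| "fwd_comp w s (Suc n) = fwd_comp w s n \<circ> w (s n)"

text \<open>Backward composition: bwd_comp w s n = w (s (n-1)) o ... o w (s 0)
  (the paper's omega_{sigma_n} o ... o omega_{sigma_1}).\<close>
fun bwd_comp :: "('l \<Rightarrow> 'a \<Rightarrow> 'a) \<Rightarrow> (nat \<Rightarrow> 'l) \<Rightarrow> nat \<Rightarrow> 'a \<Rightarrow> 'a" where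
  "bwd_comp w s 0 = id"
| "bwd_comp w s (Suc n) = w (s n) \<circ> bwd_comp w s n"

end

theory Submission
  imports Defs
begin

text \<open>
  Write \<open>B\<^sub>n\<close> for the diameter of the backward image \<open>\<omega>\<^sub>\<sigma>\<^sub>n \<circ> \<dots> \<circ> \<omega>\<^sub>\<sigma>\<^sub>1 (X)\<close>
  and \<open>D\<^sub>n\<close> for that of the forward image \<open>\<omega>\<^sub>\<sigma>\<^sub>1 \<circ> \<dots> \<circ> \<omega>\<^sub>\<sigma>\<^sub>n (X)\<close>.
  Reversing the first \<open>n\<close> coordinates preserves \<open>\<bbbP>\<close> and turns \<open>D\<^sub>n\<close> into \<open>B\<^sub>n\<close>,
  so \<open>E D\<^sub>n = E B\<^sub>n\<close>; moreover \<open>D\<^sub>n\<close> decreases in \<open>n\<close>, and \<open>B\<^sub>j\<^sub>+\<^sub>k\<close> is at most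
  \<open>B\<^sub>k\<close> of the sequence shifted by \<open>j\<close>.

  If the Cesaro averages of \<open>B\<^sub>n\<close> tend to 0 almost surely, bounded convergence and
  monotonicity give \<open>E D\<^sub>n \<le> E (average of B\<^sub>1, \<dots>, B\<^sub>n) \<rightarrow> 0\<close>, and a decreasing
  nonnegative sequence whose expectations tend to 0 tends to 0 almost surely.
  Conversely, if \<open>D\<^sub>n \<rightarrow> 0\<close> almost surely then \<open>E B\<^sub>k = E D\<^sub>k \<rightarrow> 0\<close>. Fixing \<open>k\<close> with
  \<open>E B\<^sub>k\<close> small, the averages of \<open>B\<^sub>n\<close> are dominated by those of the shifted \<open>B\<^sub>k\<close>'s;
  along each residue class mod \<open>k\<close> these depend on disjoint blocks of coordinates, hence
  are independent and bounded, and Hoeffding's inequality with Borel-Cantelli bounds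
  their averages eventually by \<open>E B\<^sub>k + \<epsilon>\<close>.
\<close>

section \<open>Forward and backward compositions\<close>

lemma bwd_comp_cong: "(\<And>i. i < n \<Longrightarrow> s i = t i) \<Longrightarrow> bwd_comp w s n = bwd_comp w t n"
  by (induction n) auto

lemma fwd_comp_Suc_left: "fwd_comp w s (Suc n) = w (s 0) \<circ> fwd_comp w (\<lambda>i. s (Suc i)) n"
  by (induction n arbitrary: s) (auto simp: comp_assoc)

text \<open>Identity beyond \<open>n\<close>, so that it is a bijection of \<open>\<nat>\<close> and preserves the product measure.\<close>

definition reverse_prefix :: "nat \<Rightarrow> nat \<Rightarrow> nat" where
  "reverse_prefix n i = (if i < n then n - Suc i else i)"

lemma inj_reverse_prefix: "inj (reverse_prefix n)"
  unfolding inj_def reverse_prefix_def by auto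

lemma fwd_comp_eq_bwd_comp_reverse: "fwd_comp w s n = bwd_comp w (s \<circ> reverse_prefix n) n"
proof (induction n arbitrary: s)
  case 0
  show ?case by simp
next
  case (Suc n)
  have "fwd_comp w s (Suc n) = w (s 0) \<circ> bwd_comp w (\<lambda>i. s (Suc (reverse_prefix n i))) n"
    by (simp only: fwd_comp_Suc_left Suc.IH) (simp add: comp_def)
  also have "bwd_comp w (\<lambda>i. s (Suc (reverse_prefix n i))) n
      = bwd_comp w (s \<circ> reverse_prefix (Suc n)) n"
    by (rule bwd_comp_cong) (auto simp: reverse_prefix_def Suc_diff_Suc)
  also have "w (s 0) \<circ> bwd_comp w (s \<circ> reverse_prefix (Suc n)) n
      = bwd_comp w (s \<circ> reverse_prefix (Suc n)) (Suc n)"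
    by (simp add: reverse_prefix_def)
  finally show ?case .
qed

lemma bwd_comp_add: "bwd_comp w s (j + k) = bwd_comp w (\<lambda>m. s (m + j)) k \<circ> bwd_comp w s j"
  by (induction k) (auto simp: add.commute)

section \<open>Measurability through finite nets\<close>

fun select_near :: "'a::metric_space list \<Rightarrow> real \<Rightarrow> 'a \<Rightarrow> 'a \<Rightarrow> 'a" where
  "select_near [] e d z = d"
| "select_near (y # ys) e d z = (if dist z y < e then y else select_near ys e d z)"

lemma select_near_in: "set ys \<subseteq> S \<Longrightarrow> d \<in> S \<Longrightarrow> select_near ys e d z \<in> S"
  by (induction ys) auto

lemma select_near_in_list: "\<exists>y\<in>set ys. dist y z < e \<Longrightarrow> select_near ys e d z \<in> set ys"
  by (induction ys) (auto simp: dist_commute)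

lemma dist_select_near_less: "\<exists>y\<in>set ys. dist y z < e \<Longrightarrow> dist (select_near ys e d z) z < e"
  by (induction ys) (auto simp: dist_commute)

lemma measurable_select_near:
  assumes g: "g \<in> borel_measurable N"
    and H: "\<And>y. y \<in> set ys \<or> y = d \<Longrightarrow> (\<lambda>x. H x y) \<in> measurable N M"
  shows "(\<lambda>x. H x (select_near ys e d (g x))) \<in> measurable N M"
  using H
proof (induction ys)
  case Nil
  then show ?case by simp
next
  case (Cons y ys)
  have "(\<lambda>x. dist (g x) y) \<in> borel_measurable N"
    by (rule borel_measurable_continuous_on[OF _ g]) (intro continuous_intros)
  then have close: "{x \<in> space N. dist (g x) y < e} \<in> sets N"
    by measurable
  have "(\<lambda>x. H x (select_near (y # ys) e d (g x)))
      = (\<lambda>x. if dist (g x) y < e then H x y else H x (select_near ys e d (g x)))"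
    by auto
  then show ?case
    using Cons by (simp only:) (rule measurable_If[OF _ _ close]; simp)
qed

definition net :: "'a::metric_space set \<Rightarrow> nat \<Rightarrow> 'a list" where
  "net K k = (SOME ys. set ys \<subseteq> K \<and> K \<subseteq> (\<Union>y\<in>set ys. ball y (1 / real (Suc k))))"

lemma
  fixes K :: "'a::metric_space set"
  assumes "compact K"
  shows set_net_subset: "set (net K k) \<subseteq> K"
    and covered_by_net: "K \<subseteq> (\<Union>y\<in>set (net K k). ball y (1 / real (Suc k)))"
proof -
  obtain F where "finite F" "F \<subseteq> K" "K \<subseteq> (\<Union>y\<in>F. ball y (1 / real (Suc k)))"
    using seq_compact_imp_totally_bounded[OF compact_imp_seq_compact[OF assms]]
    by (meson of_nat_0_less_iff divide_pos_pos zero_less_Suc zero_less_one)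
  moreover obtain ys where "set ys = F"
    using \<open>finite F\<close> finite_list by blast
  ultimately have "\<exists>ys. set ys \<subseteq> K \<and> K \<subseteq> (\<Union>y\<in>set ys. ball y (1 / real (Suc k)))"
    by blast
  then have "set (net K k) \<subseteq> K \<and> K \<subseteq> (\<Union>y\<in>set (net K k). ball y (1 / real (Suc k)))"
    unfolding net_def by (rule someI_ex)
  then show "set (net K k) \<subseteq> K" "K \<subseteq> (\<Union>y\<in>set (net K k). ball y (1 / real (Suc k)))"
    by auto
qed

definition net_approx :: "'a::metric_space set \<Rightarrow> nat \<Rightarrow> 'a \<Rightarrow> 'a" where
  "net_approx K k = select_near (net K k) (1 / real (Suc k)) (SOME x. x \<in> K)"

context
  fixes K :: "'a::metric_space set"
  assumes K: "compact K"
begin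

lemma near_net_point:
  assumes "z \<in> K"
  shows "\<exists>y\<in>set (net K k). dist y z < 1 / real (Suc k)"
proof -
  obtain y where "y \<in> set (net K k)" "z \<in> ball y (1 / real (Suc k))"
    using covered_by_net[OF K] assms by blast
  then show ?thesis
    by auto
qed

lemma net_approx_in: "K \<noteq> {} \<Longrightarrow> net_approx K k z \<in> K"
  unfolding net_approx_def
  by (rule select_near_in[OF set_net_subset[OF K]]) (simp add: some_in_eq)

lemma net_approx_in_net: "z \<in> K \<Longrightarrow> net_approx K k z \<in> set (net K k)"
  unfolding net_approx_def by (intro select_near_in_list near_net_point)

lemma net_approx_tendsto:
  assumes "z \<in> K"
  shows "(\<lambda>k. net_approx K k z) \<longlonglongrightarrow> z"
proof -
  have "dist (net_approx K k z) z < 1 / real (Suc k)" for k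
    unfolding net_approx_def using assms by (intro dist_select_near_less near_net_point)
  then have le: "dist (net_approx K k z) z \<le> 1 / real (Suc k)" for k
    by (rule less_imp_le)
  have lim: "(\<lambda>k. 1 / real (Suc k)) \<longlonglongrightarrow> 0"
    by (rule LIMSEQ_Suc[OF lim_const_over_n])
  have "(\<lambda>k. dist (net_approx K k z) z) \<longlonglongrightarrow> 0"
    by (rule tendsto_sandwich[OF always_eventually always_eventually tendsto_const lim])
      (blast intro: le zero_le_dist)+
  then show ?thesis
    by (rule tendsto_dist_iff[THEN iffD2])
qed

lemma measurable_net_approx:
  assumes "K \<noteq> {}" "g \<in> borel_measurable N" "\<And>y. y \<in> K \<Longrightarrow> (\<lambda>x. H x y) \<in> measurable N M"
  shows "(\<lambda>x. H x (net_approx K k (g x))) \<in> measurable N M"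
  unfolding net_approx_def
proof (rule measurable_select_near[OF assms(2)])
  fix y
  assume "y \<in> set (net K k) \<or> y = (SOME x. x \<in> K)"
  then have "y \<in> K"
    using set_net_subset[OF K] some_in_eq[of K] assms(1) by blast
  then show "(\<lambda>x. H x y) \<in> measurable N M"
    by (rule assms(3))
qed

end

text \<open>
  No second countability is assumed, so the Borel sets of a product need not be generated by
  rectangles; joint measurability of \<open>x \<mapsto> H x (g x)\<close> is instead obtained by approximating \<open>g\<close>
  with the finitely-valued maps \<open>net_approx K k \<circ> g\<close>.
\<close>

lemma borel_measurable_compose_compact:
  fixes g :: "'b \<Rightarrow> 'a::metric_space" and H :: "'b \<Rightarrow> 'a \<Rightarrow> 'c::metric_space"
  assumes K: "compact K" and g: "g \<in> borel_measurable N"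
    and gK: "\<And>x. x \<in> space N \<Longrightarrow> g x \<in> K"
    and H: "\<And>y. y \<in> K \<Longrightarrow> (\<lambda>x. H x y) \<in> borel_measurable N"
    and cont: "\<And>x. x \<in> space N \<Longrightarrow> continuous_on K (H x)"
  shows "(\<lambda>x. H x (g x)) \<in> borel_measurable N"
proof (cases "K = {}")
  case True
  then have "space N = {}"
    using gK by blast
  then show ?thesis
    by (simp add: measurable_def)
next
  case False
  show ?thesis
  proof (rule borel_measurable_LIMSEQ_metric)
    show "(\<lambda>x. H x (net_approx K k (g x))) \<in> borel_measurable N" for k
      by (rule measurable_net_approx[OF K False g H])
    show "(\<lambda>k. H x (net_approx K k (g x))) \<longlonglongrightarrow> H x (g x)" if "x \<in> space N" for x
      by (rule continuous_on_tendsto_compose[OF cont[OF that] net_approx_tendsto[OF K gK[OF that]] gK[OF that]])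
        (simp add: net_approx_in[OF K False])
  qed
qed

definition net_dist_max :: "('a::metric_space \<Rightarrow> 'b::metric_space) \<Rightarrow> 'a set \<Rightarrow> nat \<Rightarrow> real" where
  "net_dist_max f K k = Max ((\<lambda>(a, b). dist (f a) (f b)) ` (set (net K k) \<times> set (net K k)))"

lemma tendsto_net_dist_max_diameter:
  assumes K: "compact K" "K \<noteq> {}" and f: "continuous_on K f"
  shows "(\<lambda>k. net_dist_max f K k) \<longlonglongrightarrow> diameter (f ` K)"
proof -
  have "compact (f ` K)"
    by (rule compact_continuous_image[OF f K(1)])
  then obtain x y where xy: "x \<in> K" "y \<in> K" and diam: "dist (f x) (f y) = diameter (f ` K)"
    using diameter_compact_attained K(2) by blast
  have bounded: "bounded (f ` K)"
    by (rule compact_imp_bounded) fact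
  have upper: "net_dist_max f K k \<le> diameter (f ` K)" for k
  proof -
    have "set (net K k) \<noteq> {}"
      using net_approx_in_net[OF K(1) xy(1), of k] by auto
    then show ?thesis
      unfolding net_dist_max_def using set_net_subset[OF K(1), of k]
      by (auto intro!: diameter_bounded_bound[OF bounded])
  qed
  have lower: "dist (f (net_approx K k x)) (f (net_approx K k y)) \<le> net_dist_max f K k" for k
    unfolding net_dist_max_def using net_approx_in_net[OF K(1)] xy
    by (intro Max_ge) (auto intro!: rev_image_eqI[of "(net_approx K k x, net_approx K k y)"])
  have lim: "(\<lambda>k. dist (f (net_approx K k x)) (f (net_approx K k y))) \<longlonglongrightarrow> diameter (f ` K)"
    unfolding diam[symmetric]
    by (intro tendsto_dist continuous_on_tendsto_compose[OF f] net_approx_tendsto[OF K(1)] xy)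
      (simp_all add: net_approx_in[OF K])
  show ?thesis
    by (rule tendsto_sandwich[OF always_eventually always_eventually lim tendsto_const])
      (blast intro: lower upper)+
qed

lemma borel_measurable_diameter_image:
  fixes f :: "'b \<Rightarrow> 'a::metric_space \<Rightarrow> 'c::metric_space"
  assumes K: "compact K" and L: "compact L"
    and meas: "\<And>y. y \<in> K \<Longrightarrow> (\<lambda>x. f x y) \<in> borel_measurable N"
    and cont: "\<And>x. x \<in> space N \<Longrightarrow> continuous_on K (f x)"
    and into: "\<And>x y. x \<in> space N \<Longrightarrow> y \<in> K \<Longrightarrow> f x y \<in> L"
  shows "(\<lambda>x. diameter (f x ` K)) \<in> borel_measurable N"
proof (cases "K = {}")
  case True
  then show ?thesis by simp
next
  case False
  have dist_meas: "(\<lambda>x. dist (f x a) (f x b)) \<in> borel_measurable N" if "a \<in> K" "b \<in> K" for a b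
  proof (rule borel_measurable_compose_compact[where H="\<lambda>x y. dist y (f x b)", OF L meas[OF that(1)]])
    show "(\<lambda>x. dist y (f x b)) \<in> borel_measurable N" for y
      by (rule borel_measurable_continuous_on[OF _ meas[OF that(2)]]) (intro continuous_intros)
    show "continuous_on L (\<lambda>y. dist y (f x b))" for x
      by (intro continuous_intros)
  qed (use into that in blast)
  show ?thesis
  proof (rule borel_measurable_LIMSEQ_real)
    show "(\<lambda>k. net_dist_max (f x) K k) \<longlonglongrightarrow> diameter (f x ` K)" if "x \<in> space N" for x
      by (rule tendsto_net_dist_max_diameter[OF K False cont[OF that]])
    show "(\<lambda>x. net_dist_max (f x) K k) \<in> borel_measurable N" for k
      unfolding net_dist_max_def case_prod_beta
      using set_net_subset[OF K, of k]
      by (intro borel_measurable_Max) (auto intro!: dist_meas)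
  qed
qed

lemma measurable_PiM_precompose:
  fixes f :: "'i \<Rightarrow> 'i" and M :: "'a measure"
  shows "(\<lambda>s. s \<circ> f) \<in> measurable (PiM UNIV (\<lambda>_. M)) (PiM UNIV (\<lambda>_. M))"
proof -
  have "(\<lambda>s. \<lambda>i\<in>UNIV. s (f i)) \<in> measurable (PiM UNIV (\<lambda>_. M)) (PiM UNIV (\<lambda>_. M))"
    by (rule measurable_restrict) simp
  then show ?thesis
    by (simp add: restrict_UNIV o_def)
qed

lemma integral_PiM_precompose_inj:
  fixes f :: "'i \<Rightarrow> 'i" and g :: "('i \<Rightarrow> 'a) \<Rightarrow> 'b::{banach, second_countable_topology}"
  assumes "prob_space M" "inj f" "g \<in> borel_measurable (PiM UNIV (\<lambda>_. M))"
  shows "(\<integral>s. g (s \<circ> f) \<partial>PiM UNIV (\<lambda>_. M)) = integral\<^sup>L (PiM UNIV (\<lambda>_. M)) g"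
proof -
  have "distr (PiM UNIV (\<lambda>_. M)) (PiM UNIV (\<lambda>_. M)) (\<lambda>s. s \<circ> f) = PiM UNIV (\<lambda>_. M)"
    using distr_PiM_reindex[of UNIV "\<lambda>_. M" f UNIV] assms(1,2) by (simp add: restrict_UNIV o_def)
  then have "integral\<^sup>L (PiM UNIV (\<lambda>_. M)) g
      = integral\<^sup>L (distr (PiM UNIV (\<lambda>_. M)) (PiM UNIV (\<lambda>_. M)) (\<lambda>s. s \<circ> f)) g"
    by simp
  also have "\<dots> = (\<integral>s. g (s \<circ> f) \<partial>PiM UNIV (\<lambda>_. M))"
    by (rule integral_distr[OF measurable_PiM_precompose assms(3)])
  finally show ?thesis ..
qed

lemma AE_tendsto_0_of_decseq:
  fixes f :: "nat \<Rightarrow> 'a \<Rightarrow> real"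
  assumes int: "\<And>n. integrable M (f n)"
    and nonneg: "\<And>n x. x \<in> space M \<Longrightarrow> 0 \<le> f n x"
    and dec: "\<And>x. x \<in> space M \<Longrightarrow> decseq (\<lambda>n. f n x)"
    and lim: "(\<lambda>n. integral\<^sup>L M (f n)) \<longlonglongrightarrow> 0"
  shows "AE x in M. (\<lambda>n. f n x) \<longlonglongrightarrow> 0"
proof -
  define L where "L x = (INF n. f n x)" for x
  have to_L: "(\<lambda>n. f n x) \<longlonglongrightarrow> L x" if "x \<in> space M" for x
    unfolding L_def using nonneg[OF that]
    by (intro LIMSEQ_decseq_INF dec[OF that] bdd_belowI[of _ 0]) auto
  have L_nonneg: "0 \<le> L x" if "x \<in> space M" for x
    unfolding L_def using nonneg[OF that] by (intro cINF_greatest) auto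
  have f_meas: "f n \<in> borel_measurable M" for n
    using int by (rule borel_measurable_integrable)
  have L_meas: "L \<in> borel_measurable M"
    by (rule borel_measurable_LIMSEQ_real[OF to_L f_meas])
  have AE_to_L: "AE x in M. (\<lambda>n. f n x) \<longlonglongrightarrow> L x"
    using to_L by (rule AE_I2)
  have dominated: "AE x in M. norm (f n x) \<le> f 0 x" for n
    using nonneg dec by (intro AE_I2) (auto intro: decseqD)
  note convergence = integrable_dominated_convergence integral_dominated_convergence
  have "integrable M L" "(\<lambda>n. integral\<^sup>L M (f n)) \<longlonglongrightarrow> integral\<^sup>L M L"
    using convergence[OF L_meas f_meas int AE_to_L dominated] by auto
  then have "integral\<^sup>L M L = 0"
    using LIMSEQ_unique lim by blast
  then have "AE x in M. L x = 0"
    using integral_nonneg_eq_0_iff_AE \<open>integrable M L\<close> L_nonneg by blast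
  then show ?thesis
  proof (rule AE_mp, intro AE_I2 impI)
    fix x
    assume "x \<in> space M" "L x = 0"
    then show "(\<lambda>n. f n x) \<longlonglongrightarrow> 0"
      using to_L by metis
  qed
qed

lemma (in prob_space) AE_eventually_sum_less:
  fixes Y :: "nat \<Rightarrow> 'a \<Rightarrow> real"
  assumes indep: "indep_vars (\<lambda>_. borel) Y UNIV"
    and range: "\<And>q x. x \<in> space M \<Longrightarrow> Y q x \<in> {0..c}" and "0 < c"
    and mean: "\<And>q. expectation (Y q) = \<mu>" and "0 < e"
  shows "AE x in M. eventually (\<lambda>N. (\<Sum>q<N. Y q x) < real N * (\<mu> + e)) sequentially"
proof -
  define A where "A N = {x \<in> space M. real N * \<mu> + real N * e \<le> (\<Sum>q<N. Y q x)}" for N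
  have [measurable]: "Y q \<in> borel_measurable M" for q
    using indep unfolding indep_vars_def by blast
  have A_sets: "A N \<in> events" for N
    unfolding A_def by measurable
  have bound: "prob (A N) \<le> exp (- 2 * e\<^sup>2 / c\<^sup>2) ^ N" for N
  proof (cases "N = 0")
    case True
    then show ?thesis by simp
  next
    case False
    interpret H: Hoeffding_ineq M "{..<N}" Y "\<lambda>_. 0" "\<lambda>_. c" "real N * \<mu>"
    proof unfold_locales
      show "indep_vars (\<lambda>_. borel) Y {..<N}"
        by (rule indep_vars_subset[OF indep]) simp
      show "AE x in M. Y q x \<in> {0..c}" for q
        using range by (intro AE_I2)
      show "real N * \<mu> \<equiv> \<Sum>q<N. expectation (Y q)"
        by (simp add: mean)
    qed simp
    have "prob (A N) \<le> exp (- 2 * (real N * e)\<^sup>2 / (\<Sum>q<N. (c - 0)\<^sup>2))"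
      unfolding A_def by (rule H.Hoeffding_ineq_ge) (use \<open>0 < e\<close> \<open>0 < c\<close> False in auto)
    also have "\<dots> = exp (real N * (- 2 * e\<^sup>2 / c\<^sup>2))"
      using False \<open>0 < c\<close> by (simp add: power2_eq_square field_simps)
    also have "\<dots> = exp (- 2 * e\<^sup>2 / c\<^sup>2) ^ N"
      by (rule exp_of_nat_mult)
    finally show ?thesis .
  qed
  have "summable (\<lambda>N. exp (- 2 * e\<^sup>2 / c\<^sup>2) ^ N)"
    using \<open>0 < e\<close> \<open>0 < c\<close> by (intro summable_geometric) simp
  then have "summable (\<lambda>N. prob (A N))"
    by (rule summable_comparison_test'[where N=0]) (use bound in simp)
  then have "AE x in M. eventually (\<lambda>N. x \<in> space M - A N) sequentially"
    by (intro borel_cantelli_AE1 A_sets) (simp_all add: emeasure_eq_measure)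
  then show ?thesis
  proof (rule AE_mp, intro AE_I2 impI)
    fix x
    assume "eventually (\<lambda>N. x \<in> space M - A N) sequentially" "x \<in> space M"
    then show "eventually (\<lambda>N. (\<Sum>q<N. Y q x) < real N * (\<mu> + e)) sequentially"
      by (elim eventually_mono) (auto simp: A_def field_simps)
  qed
qed

lemma sum_lessThan_mult_by_residues:
  fixes z :: "nat \<Rightarrow> 'b::comm_monoid_add"
  shows "(\<Sum>j<N * k. z j) = (\<Sum>r<k. \<Sum>q<N. z (q * k + r))"
proof -
  have "(\<Sum>j<N * k. z j) = (\<Sum>q<N. \<Sum>j=q * k..<q * k + k. z j)"
    by (rule sum.nat_group[symmetric])
  also have "\<dots> = (\<Sum>q<N. \<Sum>r<k. z (q * k + r))"
    by (simp add: sum.atLeastLessThan_shift_0 atLeast0LessThan)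
  also have "\<dots> = (\<Sum>r<k. \<Sum>q<N. z (q * k + r))"
    by (rule sum.swap)
  finally show ?thesis .
qed

lemma sum_le_of_residue_class_bounds:
  fixes z :: "nat \<Rightarrow> real"
  assumes "0 < k" "\<And>j. 0 \<le> z j" "0 \<le> c"
    and residues: "\<And>r N. r < k \<Longrightarrow> N0 \<le> N \<Longrightarrow> (\<Sum>q<N. z (q * k + r)) \<le> real N * c"
    and "N0 * k \<le> n"
  shows "(\<Sum>j<n. z j) \<le> (real n + real k) * c"
proof -
  define N where "N = n div k + 1"
  have "N0 \<le> n div k"
    using assms(1,5) by (simp add: less_eq_div_iff_mult_less_eq)
  then have "N0 \<le> N"
    by (simp add: N_def)
  have "N * k = n div k * k + k"
    by (simp add: N_def algebra_simps)
  then have "n \<le> N * k" "N * k \<le> n + k"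
    using div_mult_mod_eq[of n k] mod_less_divisor[OF assms(1), of n] by linarith+
  have "(\<Sum>j<n. z j) \<le> (\<Sum>j<N * k. z j)"
    using \<open>n \<le> N * k\<close> assms(2) by (intro sum_mono2) auto
  also have "\<dots> = (\<Sum>r<k. \<Sum>q<N. z (q * k + r))"
    by (rule sum_lessThan_mult_by_residues)
  also have "\<dots> \<le> (\<Sum>r<k. real N * c)"
    using residues \<open>N0 \<le> N\<close> by (intro sum_mono) auto
  also have "\<dots> = real (N * k) * c"
    by simp
  also have "\<dots> \<le> (real n + real k) * c"
    using \<open>N * k \<le> n + k\<close> \<open>0 \<le> c\<close> by (intro mult_right_mono) (metis of_nat_add of_nat_le_iff)
  finally show ?thesis .
qed

section \<open>Random iteration of a continuous family of maps\<close>

locale random_iteration =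
  fixes X :: "'a::metric_space set" and Lam :: "'l::metric_space set"
    and w :: "'l \<Rightarrow> 'a \<Rightarrow> 'a" and p :: "'l measure"
  assumes compact_X: "compact X"
    and continuous_w: "continuous_on (Lam \<times> X) (\<lambda>(l, x). w l x)"
    and w_in_X: "\<And>l x. l \<in> Lam \<Longrightarrow> x \<in> X \<Longrightarrow> w l x \<in> X"
    and sets_p: "sets p = sets (restrict_space borel Lam)"
    and prob_space_p: "prob_space p"
begin

abbreviation P :: "(nat \<Rightarrow> 'l) measure" where
  "P \<equiv> PiM UNIV (\<lambda>_. p)"

sublocale P: prob_space P
  by (intro prob_space_PiM prob_space_p)

lemma space_p: "space p = Lam"
  using sets_eq_imp_space_eq[OF sets_p] by (simp add: space_restrict_space)

lemma space_P: "s \<in> space P \<longleftrightarrow> (\<forall>i. s i \<in> Lam)"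
  by (simp add: space_PiM space_p PiE_def Pi_def)

lemma continuous_on_w: "l \<in> Lam \<Longrightarrow> continuous_on X (w l)"
  using continuous_on_compose2[OF continuous_w continuous_on_Pair[OF continuous_on_const continuous_on_id]]
  by auto

lemma continuous_on_w_param: "x \<in> X \<Longrightarrow> continuous_on Lam (\<lambda>l. w l x)"
  using continuous_on_compose2[OF continuous_w continuous_on_Pair[OF continuous_on_id continuous_on_const]]
  by auto

lemma bwd_comp_in_X: "(\<And>i. i < n \<Longrightarrow> s i \<in> Lam) \<Longrightarrow> x \<in> X \<Longrightarrow> bwd_comp w s n x \<in> X"
  by (induction n) (auto intro: w_in_X)

lemma continuous_on_bwd_comp:
  "(\<And>i. i < n \<Longrightarrow> s i \<in> Lam) \<Longrightarrow> continuous_on X (bwd_comp w s n)"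
proof (induction n)
  case 0
  show ?case by simp
next
  case (Suc n)
  have "continuous_on X (w (s n) \<circ> bwd_comp w s n)"
    using Suc bwd_comp_in_X[of n s]
    by (intro continuous_on_compose continuous_on_subset[OF continuous_on_w]) auto
  then show ?case by simp
qed

lemma in_Lam_of_measurable:
  assumes "\<And>i. i < n \<Longrightarrow> (\<lambda>x. c x i) \<in> measurable N p" "x \<in> space N"
  shows "\<And>i. i < n \<Longrightarrow> c x i \<in> Lam"
  using measurable_space[OF assms(1) assms(2)] space_p by simp

lemma borel_measurable_bwd_comp:
  assumes "\<And>i. i < n \<Longrightarrow> (\<lambda>x. c x i) \<in> measurable N p" and "z \<in> X"
  shows "(\<lambda>x. bwd_comp w (c x) n z) \<in> borel_measurable N"
  using assms(1)
proof (induction n)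
  case 0
  then show ?case by simp
next
  case (Suc n)
  have c_n: "(\<lambda>x. c x n) \<in> measurable N (restrict_space borel Lam)"
    using Suc.prems measurable_cong_sets[OF refl sets_p] by auto
  have "(\<lambda>x. w (c x n) (bwd_comp w (c x) n z)) \<in> borel_measurable N"
  proof (rule borel_measurable_compose_compact[OF compact_X,
        where g="\<lambda>x. bwd_comp w (c x) n z" and H="\<lambda>x. w (c x n)"])
    show "(\<lambda>x. bwd_comp w (c x) n z) \<in> borel_measurable N"
      using Suc by simp
    show "bwd_comp w (c x) n z \<in> X" if "x \<in> space N" for x
      using in_Lam_of_measurable[OF Suc.prems that] \<open>z \<in> X\<close> by (rule bwd_comp_in_X) simp
    show "(\<lambda>x. w (c x n) y) \<in> borel_measurable N" if "y \<in> X" for y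
      using measurable_compose[OF c_n borel_measurable_continuous_on_restrict[OF continuous_on_w_param[OF that]]] .
    show "continuous_on X (w (c x n))" if "x \<in> space N" for x
      by (rule continuous_on_w[OF in_Lam_of_measurable[OF Suc.prems that lessI]])
  qed
  then show ?case by simp
qed

lemma borel_measurable_bwd_comp_diameter:
  assumes c: "\<And>i. i < n \<Longrightarrow> (\<lambda>x. c x i) \<in> measurable N p"
  shows "(\<lambda>x. diameter (bwd_comp w (c x) n ` X)) \<in> borel_measurable N"
proof (rule borel_measurable_diameter_image[OF compact_X compact_X])
  show "(\<lambda>x. bwd_comp w (c x) n y) \<in> borel_measurable N" if "y \<in> X" for y
    by (rule borel_measurable_bwd_comp[OF c that])
  show "continuous_on X (bwd_comp w (c x) n)" if "x \<in> space N" for x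
    by (rule continuous_on_bwd_comp[OF in_Lam_of_measurable[OF c that]])
  show "bwd_comp w (c x) n y \<in> X" if "x \<in> space N" "y \<in> X" for x y
    by (rule bwd_comp_in_X[OF in_Lam_of_measurable[OF c that(1)] that(2)])
qed

definition bwd_diam :: "nat \<Rightarrow> (nat \<Rightarrow> 'l) \<Rightarrow> real" where
  "bwd_diam n s = diameter (bwd_comp w s n ` X)"

definition fwd_diam :: "nat \<Rightarrow> (nat \<Rightarrow> 'l) \<Rightarrow> real" where
  "fwd_diam n s = diameter (fwd_comp w s n ` X)"

definition bwd_diam_avg :: "nat \<Rightarrow> (nat \<Rightarrow> 'l) \<Rightarrow> real" where
  "bwd_diam_avg n s = 1 / real n * (\<Sum>i=1..n. bwd_diam i s)"

lemma fwd_diam_eq_bwd_diam: "fwd_diam n = (\<lambda>s. bwd_diam n (s \<circ> reverse_prefix n))"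
  unfolding fwd_diam_def bwd_diam_def fwd_comp_eq_bwd_comp_reverse ..

lemma borel_measurable_bwd_diam_precompose:
  "(\<lambda>s. bwd_diam n (s \<circ> f)) \<in> borel_measurable P"
  unfolding bwd_diam_def by (rule borel_measurable_bwd_comp_diameter) simp

lemma borel_measurable_bwd_diam [measurable]: "bwd_diam n \<in> borel_measurable P"
  using borel_measurable_bwd_diam_precompose[of n id] by simp

lemma borel_measurable_fwd_diam [measurable]: "fwd_diam n \<in> borel_measurable P"
  unfolding fwd_diam_eq_bwd_diam by (rule borel_measurable_bwd_diam_precompose)

lemma borel_measurable_bwd_diam_avg [measurable]: "bwd_diam_avg n \<in> borel_measurable P"
  unfolding bwd_diam_avg_def by measurable

lemma bwd_comp_image_subset: "s \<in> space P \<Longrightarrow> bwd_comp w s n ` X \<subseteq> X"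
  using bwd_comp_in_X space_P by blast

lemma bounded_X: "bounded X"
  by (rule compact_imp_bounded[OF compact_X])

lemma bwd_diam_nonneg: "s \<in> space P \<Longrightarrow> 0 \<le> bwd_diam n s"
  unfolding bwd_diam_def
  by (rule diameter_ge_0[OF bounded_subset[OF bounded_X bwd_comp_image_subset]])

lemma bwd_diam_le: "s \<in> space P \<Longrightarrow> bwd_diam n s \<le> diameter X"
  unfolding bwd_diam_def by (rule diameter_subset[OF bwd_comp_image_subset bounded_X])

lemma space_P_precompose: "s \<in> space P \<Longrightarrow> s \<circ> f \<in> space P"
  by (simp add: space_P)

lemma fwd_diam_nonneg: "s \<in> space P \<Longrightarrow> 0 \<le> fwd_diam n s"
  unfolding fwd_diam_eq_bwd_diam by (intro bwd_diam_nonneg space_P_precompose)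

lemma fwd_diam_le: "s \<in> space P \<Longrightarrow> fwd_diam n s \<le> diameter X"
  unfolding fwd_diam_eq_bwd_diam by (intro bwd_diam_le space_P_precompose)

lemma bwd_diam_avg_nonneg: "s \<in> space P \<Longrightarrow> 0 \<le> bwd_diam_avg n s"
  unfolding bwd_diam_avg_def by (simp add: bwd_diam_nonneg sum_nonneg)

lemma bwd_diam_avg_le: "s \<in> space P \<Longrightarrow> bwd_diam_avg n s \<le> diameter X"
proof -
  assume s: "s \<in> space P"
  have "(\<Sum>i=1..n. bwd_diam i s) \<le> real n * diameter X"
    using sum_bounded_above[of "{1..n}" "\<lambda>i. bwd_diam i s" "diameter X"] bwd_diam_le[OF s] by simp
  then show ?thesis
    unfolding bwd_diam_avg_def using diameter_ge_0[OF bounded_X]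
    by (cases "n = 0") (auto simp: field_simps)
qed

lemma decseq_fwd_diam: "s \<in> space P \<Longrightarrow> decseq (\<lambda>n. fwd_diam n s)"
proof (rule decseq_SucI)
  fix n
  assume s: "s \<in> space P"
  have "fwd_comp w s (Suc n) ` X \<subseteq> fwd_comp w s n ` X"
    using w_in_X s by (auto simp: space_P)
  moreover have "fwd_comp w s n ` X \<subseteq> X"
    using bwd_comp_image_subset[OF space_P_precompose[OF s]] by (simp add: fwd_comp_eq_bwd_comp_reverse)
  ultimately show "fwd_diam (Suc n) s \<le> fwd_diam n s"
    unfolding fwd_diam_def by (intro diameter_subset bounded_subset[OF bounded_X])
qed

lemma bwd_diam_add_le: "s \<in> space P \<Longrightarrow> bwd_diam (j + k) s \<le> bwd_diam k (\<lambda>m. s (m + j))"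
proof -
  assume s: "s \<in> space P"
  have shifted: "(\<lambda>m. s (m + j)) \<in> space P"
    using s by (simp add: space_P)
  have "bwd_comp w s (j + k) ` X \<subseteq> bwd_comp w (\<lambda>m. s (m + j)) k ` X"
    using bwd_comp_image_subset[OF s] by (auto simp: bwd_comp_add)
  then show ?thesis
    unfolding bwd_diam_def
    by (intro diameter_subset bounded_subset[OF bounded_X] bwd_comp_image_subset[OF shifted])
qed

lemma integrable_bounded_by_diameter:
  "f \<in> borel_measurable P \<Longrightarrow> (\<And>s. s \<in> space P \<Longrightarrow> 0 \<le> f s \<and> f s \<le> diameter X) \<Longrightarrow> integrable P f"
  by (rule P.integrable_const_bound[where B="diameter X"]) auto

lemma integrable_bwd_diam: "integrable P (bwd_diam n)"
  by (intro integrable_bounded_by_diameter) (auto intro: bwd_diam_nonneg bwd_diam_le)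

lemma integrable_fwd_diam: "integrable P (fwd_diam n)"
  by (intro integrable_bounded_by_diameter) (auto intro: fwd_diam_nonneg fwd_diam_le)

lemma integral_bwd_diam_precompose:
  "inj f \<Longrightarrow> (\<integral>s. bwd_diam n (s \<circ> f) \<partial>P) = integral\<^sup>L P (bwd_diam n)"
  by (rule integral_PiM_precompose_inj[OF prob_space_p]) simp_all

lemma integral_fwd_diam: "integral\<^sup>L P (fwd_diam n) = integral\<^sup>L P (bwd_diam n)"
  unfolding fwd_diam_eq_bwd_diam by (rule integral_bwd_diam_precompose[OF inj_reverse_prefix])

lemma integral_fwd_diam_le_avg:
  assumes "0 < n"
  shows "integral\<^sup>L P (fwd_diam n) \<le> integral\<^sup>L P (bwd_diam_avg n)"
proof -
  have "real n * integral\<^sup>L P (fwd_diam n) = (\<Sum>i=1..n. integral\<^sup>L P (fwd_diam n))"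
    by simp
  also have "\<dots> \<le> (\<Sum>i=1..n. integral\<^sup>L P (fwd_diam i))"
    using decseq_fwd_diam
    by (intro sum_mono integral_mono integrable_fwd_diam) (auto dest: decseqD)
  also have "\<dots> = real n * integral\<^sup>L P (bwd_diam_avg n)"
    using assms unfolding bwd_diam_avg_def integral_fwd_diam
    by (simp add: integral_sum integrable_bwd_diam)
  finally show ?thesis
    using assms by simp
qed

lemma indep_coordinates: "P.indep_vars (\<lambda>_. p) (\<lambda>i s. s i) UNIV"
proof -
  have "distr P p (\<lambda>s. s i) = p" for i
    by (rule distr_PiM_component) (simp_all add: prob_space_p)
  moreover have "(\<lambda>s. s i) \<in> measurable P p" for i
    by simp
  ultimately show ?thesis
    by (subst P.indep_vars_iff_distr_eq_PiM) (simp_all add: restrict_UNIV)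
qed

lemma indep_bwd_diam_blocks:
  "P.indep_vars (\<lambda>_. borel) (\<lambda>q s. bwd_diam k (\<lambda>m. s (m + (q * k + r)))) UNIV"
proof -
  define K where "K q = {q * k + r ..< q * k + r + k}" for q
  have "K q \<inter> K q' = {}" if "q < q'" for q q'
  proof -
    have "Suc q * k \<le> q' * k"
      using that by (intro mult_le_mono1) simp
    then show ?thesis
      by (auto simp: K_def)
  qed
  then have "disjoint_family K"
    unfolding disjoint_family_on_def by (metis Int_commute linorder_neqE_nat)
  then have blocks: "P.indep_vars (\<lambda>q. PiM (K q) (\<lambda>_. p)) (\<lambda>q s. restrict (\<lambda>i. s i) (K q)) UNIV"
    by (intro P.indep_vars_restrict[OF indep_coordinates]) simp_all
  have "P.indep_vars (\<lambda>_. borel)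
      (\<lambda>q s. bwd_diam k (\<lambda>m. restrict (\<lambda>i. s i) (K q) (m + (q * k + r)))) UNIV"
    unfolding bwd_diam_def
    by (rule P.indep_vars_compose2[OF blocks, where Y="\<lambda>q t. diameter (bwd_comp w (\<lambda>m. t (m + (q * k + r))) k ` X)"])
      (auto intro!: borel_measurable_bwd_comp_diameter measurable_component_singleton simp: K_def)
  moreover have "bwd_diam k (\<lambda>m. restrict (\<lambda>i. s i) (K q) (m + (q * k + r)))
      = bwd_diam k (\<lambda>m. s (m + (q * k + r)))" for q s
    unfolding bwd_diam_def by (subst bwd_comp_cong[where t="\<lambda>m. s (m + (q * k + r))"]) (auto simp: K_def)
  ultimately show ?thesis
    by simp
qed

lemma sum_bwd_diam_le_shifted:
  assumes s: "s \<in> space P" and "0 < k"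
  shows "(\<Sum>i=1..n. bwd_diam i s) \<le> real k * diameter X + (\<Sum>j<n. bwd_diam k (\<lambda>m. s (m + j)))"
proof -
  have "(\<Sum>i=1..n. bwd_diam i s) \<le> (\<Sum>i<k + n. bwd_diam i s)"
    using bwd_diam_nonneg[OF s] \<open>0 < k\<close> by (intro sum_mono2) auto
  also have "\<dots> = (\<Sum>i<k. bwd_diam i s) + (\<Sum>j<n. bwd_diam (j + k) s)"
    by (induction n) (simp_all add: ac_simps)
  also have "\<dots> \<le> real k * diameter X + (\<Sum>j<n. bwd_diam k (\<lambda>m. s (m + j)))"
    using sum_bounded_above[of "{..<k}" "\<lambda>i. bwd_diam i s" "diameter X"] bwd_diam_le[OF s]
      bwd_diam_add_le[OF s]
    by (intro add_mono sum_mono) auto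
  finally show ?thesis .
qed

lemma AE_eventually_sum_bwd_diam_le:
  assumes "0 < k" "0 < e"
  shows "AE s in P. eventually (\<lambda>n. (\<Sum>i=1..n. bwd_diam i s)
    \<le> real k * diameter X + (real n + real k) * (integral\<^sup>L P (bwd_diam k) + e)) sequentially"
proof -
  define \<mu> where "\<mu> = integral\<^sup>L P (bwd_diam k)"
  define Z where "Z j s = bwd_diam k (\<lambda>m. s (m + j))" for j s
  have Z_bounds: "0 \<le> Z j s \<and> Z j s \<le> diameter X" if "s \<in> space P" for j s
    unfolding Z_def using that by (intro conjI bwd_diam_nonneg bwd_diam_le) (simp_all add: space_P)
  have "0 \<le> \<mu>"
    unfolding \<mu>_def by (intro integral_nonneg_AE AE_I2 bwd_diam_nonneg)
  have "AE s in P. eventually (\<lambda>N. (\<Sum>q<N. Z (q * k + r) s) < real N * (\<mu> + e)) sequentially" for r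
  proof (rule P.AE_eventually_sum_less[where c="diameter X + 1"])
    show "P.indep_vars (\<lambda>_. borel) (\<lambda>q. Z (q * k + r)) UNIV"
      unfolding Z_def by (rule indep_bwd_diam_blocks)
    show "Z (q * k + r) s \<in> {0..diameter X + 1}" if "s \<in> space P" for q s
      using Z_bounds[OF that, of "q * k + r"] by simp
    show "0 < diameter X + 1"
      using diameter_ge_0[OF bounded_X] by simp
    show "P.expectation (Z (q * k + r)) = \<mu>" for q
      using integral_bwd_diam_precompose[of "\<lambda>m. m + (q * k + r)" k]
      unfolding Z_def \<mu>_def by (simp add: inj_def o_def)
  qed fact
  then have "AE s in P. \<forall>r\<in>{..<k}.
      eventually (\<lambda>N. (\<Sum>q<N. Z (q * k + r) s) < real N * (\<mu> + e)) sequentially"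
    by (intro AE_finite_allI) simp_all
  then show ?thesis
  proof (rule AE_mp, intro AE_I2 impI)
    fix s
    assume s: "s \<in> space P"
      and "\<forall>r\<in>{..<k}. eventually (\<lambda>N. (\<Sum>q<N. Z (q * k + r) s) < real N * (\<mu> + e)) sequentially"
    then have "eventually (\<lambda>N. \<forall>r\<in>{..<k}. (\<Sum>q<N. Z (q * k + r) s) < real N * (\<mu> + e)) sequentially"
      by (intro eventually_ball_finite) simp_all
    then obtain N0 where N0: "\<And>r N. r < k \<Longrightarrow> N0 \<le> N \<Longrightarrow> (\<Sum>q<N. Z (q * k + r) s) \<le> real N * (\<mu> + e)"
      unfolding eventually_sequentially by (meson lessThan_iff less_imp_le)
    have "(\<Sum>i=1..n. bwd_diam i s) \<le> real k * diameter X + (real n + real k) * (\<mu> + e)"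
      if "N0 * k \<le> n" for n
    proof -
      have "(\<Sum>j<n. Z j s) \<le> (real n + real k) * (\<mu> + e)"
        using Z_bounds[OF s] \<open>0 \<le> \<mu>\<close> \<open>0 < e\<close>
        by (intro sum_le_of_residue_class_bounds[OF \<open>0 < k\<close> _ _ N0 that]) auto
      then show ?thesis
        using sum_bwd_diam_le_shifted[OF s \<open>0 < k\<close>, of n] unfolding Z_def by linarith
    qed
    then show "eventually (\<lambda>n. (\<Sum>i=1..n. bwd_diam i s)
        \<le> real k * diameter X + (real n + real k) * (integral\<^sup>L P (bwd_diam k) + e)) sequentially"
      unfolding \<mu>_def eventually_sequentially by blast
  qed
qed

lemma AE_fwd_diam_tendsto_0:
  assumes "AE s in P. (\<lambda>n. bwd_diam_avg n s) \<longlonglongrightarrow> 0"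
  shows "AE s in P. (\<lambda>n. fwd_diam n s) \<longlonglongrightarrow> 0"
proof (rule AE_tendsto_0_of_decseq[OF integrable_fwd_diam fwd_diam_nonneg decseq_fwd_diam])
  have "(\<lambda>n. integral\<^sup>L P (bwd_diam_avg n)) \<longlonglongrightarrow> integral\<^sup>L P (\<lambda>_. 0)"
  proof (rule integral_dominated_convergence[where w="\<lambda>_. diameter X"])
    show "AE s in P. norm (bwd_diam_avg n s) \<le> diameter X" for n
      by (intro AE_I2) (simp add: bwd_diam_avg_nonneg bwd_diam_avg_le)
  qed (use assms in simp_all)
  then have avg: "(\<lambda>n. integral\<^sup>L P (bwd_diam_avg n)) \<longlonglongrightarrow> 0"
    by simp
  have "eventually (\<lambda>n. integral\<^sup>L P (fwd_diam n) \<le> integral\<^sup>L P (bwd_diam_avg n)) sequentially"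
    using eventually_gt_at_top[of 0] by (rule eventually_mono) (rule integral_fwd_diam_le_avg)
  moreover have "0 \<le> integral\<^sup>L P (fwd_diam n)" for n
    by (intro integral_nonneg_AE AE_I2 fwd_diam_nonneg)
  ultimately show "(\<lambda>n. integral\<^sup>L P (fwd_diam n)) \<longlonglongrightarrow> 0"
    by (intro tendsto_sandwich[OF always_eventually _ tendsto_const avg]) auto
qed

lemma AE_eventually_bwd_diam_avg_less:
  assumes "AE s in P. (\<lambda>n. fwd_diam n s) \<longlonglongrightarrow> 0" and "0 < \<epsilon>"
  shows "AE s in P. eventually (\<lambda>n. bwd_diam_avg n s < \<epsilon>) sequentially"
proof -
  have "(\<lambda>n. integral\<^sup>L P (fwd_diam n)) \<longlonglongrightarrow> integral\<^sup>L P (\<lambda>_. 0)"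
  proof (rule integral_dominated_convergence[where w="\<lambda>_. diameter X"])
    show "AE s in P. norm (fwd_diam n s) \<le> diameter X" for n
      by (intro AE_I2) (simp add: fwd_diam_nonneg fwd_diam_le)
  qed (use assms(1) in simp_all)
  then have "(\<lambda>k. integral\<^sup>L P (bwd_diam k)) \<longlonglongrightarrow> 0"
    by (simp add: integral_fwd_diam)
  moreover have "0 < \<epsilon> / 2"
    using assms(2) by simp
  ultimately have "eventually (\<lambda>k. 0 < k \<and> integral\<^sup>L P (bwd_diam k) < \<epsilon> / 2) sequentially"
    by (intro eventually_conj eventually_gt_at_top order_tendstoD(2))
  then obtain k where "0 < k" and small: "integral\<^sup>L P (bwd_diam k) < \<epsilon> / 2"
    unfolding eventually_sequentially by blast
  define \<mu> where "\<mu> = integral\<^sup>L P (bwd_diam k)"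
  define C where "C = real k * diameter X + real k * (\<mu> + \<epsilon> / 4)"
  have large_n: "eventually (\<lambda>n. 0 < n \<and> C / real n < \<epsilon> / 4) sequentially"
    using assms(2) by (intro eventually_conj eventually_gt_at_top order_tendstoD(2)[OF lim_const_over_n]) simp
  have "AE s in P. eventually (\<lambda>n. (\<Sum>i=1..n. bwd_diam i s)
      \<le> real k * diameter X + (real n + real k) * (\<mu> + \<epsilon> / 4)) sequentially"
    unfolding \<mu>_def using \<open>0 < k\<close> assms(2) by (intro AE_eventually_sum_bwd_diam_le) simp_all
  then show ?thesis
  proof (rule AE_mp, intro AE_I2 impI)
    fix s
    assume "eventually (\<lambda>n. (\<Sum>i=1..n. bwd_diam i s)
      \<le> real k * diameter X + (real n + real k) * (\<mu> + \<epsilon> / 4)) sequentially"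
    with large_n show "eventually (\<lambda>n. bwd_diam_avg n s < \<epsilon>) sequentially"
    proof eventually_elim
      case (elim n)
      have "real k * diameter X + (real n + real k) * (\<mu> + \<epsilon> / 4) = real n * (\<mu> + \<epsilon> / 4) + C"
        by (simp add: C_def algebra_simps)
      with elim have "(\<Sum>i=1..n. bwd_diam i s) \<le> real n * (\<mu> + \<epsilon> / 4) + C"
        by linarith
      then have "(\<Sum>i=1..n. bwd_diam i s) / real n \<le> (real n * (\<mu> + \<epsilon> / 4) + C) / real n"
        by (rule divide_right_mono) simp
      also have "\<dots> = \<mu> + \<epsilon> / 4 + C / real n"
        using elim by (simp add: add_divide_distrib)
      finally have "(\<Sum>i=1..n. bwd_diam i s) / real n < \<epsilon>"
        using elim small unfolding \<mu>_def by linarith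
      then show ?case
        by (simp add: bwd_diam_avg_def)
    qed
  qed
qed

lemma AE_bwd_diam_avg_tendsto_0:
  assumes "AE s in P. (\<lambda>n. fwd_diam n s) \<longlonglongrightarrow> 0"
  shows "AE s in P. (\<lambda>n. bwd_diam_avg n s) \<longlonglongrightarrow> 0"
proof -
  have "AE s in P. \<forall>m. eventually (\<lambda>n. bwd_diam_avg n s < 1 / real (Suc m)) sequentially"
    unfolding AE_all_countable using AE_eventually_bwd_diam_avg_less[OF assms] by simp
  then show ?thesis
  proof (rule AE_mp, intro AE_I2 impI)
    fix s
    assume s: "s \<in> space P"
      and small: "\<forall>m. eventually (\<lambda>n. bwd_diam_avg n s < 1 / real (Suc m)) sequentially"
    show "(\<lambda>n. bwd_diam_avg n s) \<longlonglongrightarrow> 0"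
    proof (rule order_tendstoI)
      show "eventually (\<lambda>n. a < bwd_diam_avg n s) sequentially" if "a < 0" for a
        using bwd_diam_avg_nonneg[OF s] that by (intro always_eventually allI) (rule less_le_trans)
      show "eventually (\<lambda>n. bwd_diam_avg n s < a) sequentially" if a: "0 < a" for a
      proof -
        obtain m where "inverse (real (Suc m)) < a"
          using reals_Archimedean[OF a] by blast
        then have lt: "1 / real (Suc m) < a"
          by (simp add: inverse_eq_divide)
        show ?thesis
          using small[rule_format, of m] by (rule eventually_mono) (rule less_trans[OF _ lt])
      qed
    qed
  qed
qed

theorem prob_bwd_diam_avg_tendsto_0_iff:
  "measure P {s \<in> space P. (\<lambda>n. bwd_diam_avg n s) \<longlonglongrightarrow> 0} = 1
    \<longleftrightarrow> measure P {s \<in> space P. (\<lambda>n. fwd_diam n s) \<longlonglongrightarrow> 0} = 1"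
proof -
  have AE_iff: "(AE x in P. x \<in> {s \<in> space P. Q s}) \<longleftrightarrow> (AE x in P. Q x)" for Q
    by (rule AE_cong) simp
  have avg_set: "{s \<in> space P. (\<lambda>n. bwd_diam_avg n s) \<longlonglongrightarrow> 0} \<in> sets P"
    by measurable
  have fwd_set: "{s \<in> space P. (\<lambda>n. fwd_diam n s) \<longlonglongrightarrow> 0} \<in> sets P"
    by measurable
  show ?thesis
    unfolding P.prob_eq_1[OF avg_set] P.prob_eq_1[OF fwd_set] AE_iff
    by (rule iffI) (erule AE_fwd_diam_tendsto_0, erule AE_bwd_diam_avg_tendsto_0)
qed

end

theorem lemma2:
  fixes X :: "'a::metric_space set" and Lam :: "'l::metric_space set"
    and w :: "'l \<Rightarrow> 'a \<Rightarrow> 'a" and p :: "'l measure"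
  assumes "compact X" and "compact Lam"
    and "continuous_on (Lam \<times> X) (\<lambda>(l, x). w l x)"
    and "\<And>l x. l \<in> Lam \<Longrightarrow> x \<in> X \<Longrightarrow> w l x \<in> X"
    and "sets p = sets (restrict_space borel Lam)"
    and "prob_space p"
  shows "measure (PiM UNIV (\<lambda>_. p))
           {s \<in> space (PiM UNIV (\<lambda>_. p)).
              (\<lambda>n. (1 / real n) * (\<Sum>i=1..n. diameter (bwd_comp w s i ` X))) \<longlonglongrightarrow> 0} = 1
     \<longleftrightarrow> measure (PiM UNIV (\<lambda>_. p))
           {s \<in> space (PiM UNIV (\<lambda>_. p)).
              (\<lambda>n. diameter (fwd_comp w s n ` X)) \<longlonglongrightarrow> 0} = 1"
proof -
  interpret random_iteration X Lam w p
    by (rule random_iteration.intro) (fact assms)+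
  show ?thesis
    using prob_bwd_diam_avg_tendsto_0_iff unfolding bwd_diam_avg_def bwd_diam_def fwd_diam_def .
qed

end
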